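(* Let $n\ge3$, $k\ge0$, let $S\subseteq\mathrm{Inc}(A,B)$ be an independent set in $G_n^k$, and let $i\in[n+k]$. Then (1) $\mathrm{DFCL}(i,S)$ is a subset of $\mathrm{Inc}(A,B)$ that is independent in $G_n^k$; (2) $\mathrm{DLCF}(i,S)$ is a subset of $\mathrm{Inc}(A,B)$ that is independent in $G_n^k$; (3) $|\mathrm{DFCL}(i,S)|+|\mathrm{DLCF}(i,S)|=2|S|$.
   Context: For integers $n\ge3$, $k\ge0$, the crown $S_n^k$ is the poset with ground set $A\cup B$, $A=\{a_1,\dots,a_{n+k}\}$, $B=\{b_1,\dots,b_{n+k}\}$, indices cyclic modulo $n+k$; elements of $A$ are pairwise incomparable, as are elements of $B$, and $a_i$ is incomparable to $b_j$ when $j\in\{i,\dots,i+k\}$ (mod $n+k$), while $a_i<b_j$ otherwise. $\mathrm{Inc}(A,B)$ is the set of pairs $(a,b)\in A\times B$ with $a$ incomparable to $b$; $G_n^k$ has vertex set $\mathrm{Inc}(A,B)$ with $(a,b)$ adjacent to $(x,y)$ iff $a<y$ and $x<b$. For an independent $S$ and $i\in[n+k]$, an ordered pair $((a,b),(x,y))$ of elements of $S$ is a contraction blocking pair at $i$ if $a=a_i$, $y=b_i$, and $x<b$ in $S_n^k$. $\mathrm{FCBP}(i,S)$ is the set of $(a,b)\in S$ for which some $(x,y)\in S$ makes $((a,b),(x,y))$ a contraction blocking pair at $i$; $\mathrm{LCBP}(i,S)$ is the set of $(x,y)\in S$ for which some $(a,b)\in S$ makes $((a,b),(x,y))$ a contraction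 blocking pair at $i$. Define $\mathrm{DFCL}(i,S)=(S-\mathrm{FCBP}(i,S))\cup\{(x,b_{i-1}):(x,y)\in\mathrm{LCBP}(i,S)\}$ and $\mathrm{DLCF}(i,S)=(S-\mathrm{LCBP}(i,S))\cup\{(a_{i+1},b):(a,b)\in\mathrm{FCBP}(i,S)\}$. *)

theory Defs
  imports Main
begin

text \<open>Crown S_n^k with N = n + k; indices are 0-based, taken in {0..<N}, cyclic mod N.
  A i stands for a_i, B j for b_j.\<close>

datatype elem = A nat | B nat

text \<open>a_i is incomparable to b_j iff j is in {i, ..., i+k} mod N, i.e. (j - i) mod N \<le> k.\<close>
definition cyc_dist :: "nat \<Rightarrow> nat \<Rightarrow> nat \<Rightarrow> nat" where
  "cyc_dist N i j = (j + N - i) mod N"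

fun crown_less :: "nat \<Rightarrow> nat \<Rightarrow> elem \<Rightarrow> elem \<Rightarrow> bool" where
  "crown_less N k (A i) (B j) = (i < N \<and> j < N \<and> \<not> cyc_dist N i j \<le> k)"
| "crown_less N k _ _ = False"

definition crown_ground :: "nat \<Rightarrow> elem set" where
  "crown_ground N = A ` {..<N} \<union> B ` {..<N}"

definition incomp :: "nat \<Rightarrow> nat \<Rightarrow> elem \<Rightarrow> elem \<Rightarrow> bool" where
  "incomp N k u v = (u \<in> crown_ground N \<and> v \<in> crown_ground N \<and> u \<noteq> v
     \<and> \<not> crown_less N k u v \<and> \<not> crown_less N k v u)"

definition Inc :: "nat \<Rightarrow> nat \<Rightarrow> (elem \<times> elem) set" where
  "Inc N k = {(a, b). a \<in> A ` {..<N} \<and> b \<in> B ` {..<N} \<and> incomp N k a b}"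

definition G_adj :: "nat \<Rightarrow> nat \<Rightarrow> elem \<times> elem \<Rightarrow> elem \<times> elem \<Rightarrow> bool" where
  "G_adj N k u v = (u \<in> Inc N k \<and> v \<in> Inc N k \<and>
     crown_less N k (fst u) (snd v) \<and> crown_less N k (fst v) (snd u))"

definition independent :: "nat \<Rightarrow> nat \<Rightarrow> (elem \<times> elem) set \<Rightarrow> bool" where
  "independent N k S = (S \<subseteq> Inc N k \<and> (\<forall>u\<in>S. \<forall>v\<in>S. \<not> G_adj N k u v))"

definition is_cbp :: "nat \<Rightarrow> nat \<Rightarrow> nat \<Rightarrow> (elem \<times> elem) set \<Rightarrow> elem \<times> elem \<Rightarrow> elem \<times> elem \<Rightarrow> bool" where
  "is_cbp N k i S u v = (u \<in> S \<and> v \<in> S \<and> fst u = A i \<and> snd v = B i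
     \<and> crown_less N k (fst v) (snd u))"

definition FCBP :: "nat \<Rightarrow> nat \<Rightarrow> nat \<Rightarrow> (elem \<times> elem) set \<Rightarrow> (elem \<times> elem) set" where
  "FCBP N k i S = {u \<in> S. \<exists>v\<in>S. is_cbp N k i S u v}"

definition LCBP :: "nat \<Rightarrow> nat \<Rightarrow> nat \<Rightarrow> (elem \<times> elem) set \<Rightarrow> (elem \<times> elem) set" where
  "LCBP N k i S = {v \<in> S. \<exists>u\<in>S. is_cbp N k i S u v}"

definition DFCL :: "nat \<Rightarrow> nat \<Rightarrow> nat \<Rightarrow> (elem \<times> elem) set \<Rightarrow> (elem \<times> elem) set" where
  "DFCL N k i S = (S - FCBP N k i S) \<union> {(fst v, B ((i + N - 1) mod N)) | v. v \<in> LCBP N k i S}"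

definition DLCF :: "nat \<Rightarrow> nat \<Rightarrow> nat \<Rightarrow> (elem \<times> elem) set \<Rightarrow> (elem \<times> elem) set" where
  "DLCF N k i S = (S - LCBP N k i S) \<union> {(A ((i + 1) mod N), snd u) | u. u \<in> FCBP N k i S}"

end

theory Submission
  imports Defs
begin

(*
  Removing the first components (a_i, b) of the contraction blocking pairs at i and replacing
  each last component (x, b_i) by (x, b_(i-1)) keeps the set independent: x \<noteq> i, so the moved
  pair is still incomparable, and an edge between (x, b_(i-1)) and an old pair (a, b) forces
  a = i, i.e. (a, b) was removed. A moved pair cannot already lie in S, since it would be
  adjacent to its blocking partner (a_i, b) (here a_i < b_(i-1) needs k + 1 < n + k). Hence
  |DFCL| + |FCBP| = |S| + |LCBP|.

  The map a_j \<mapsto> b_(-j), b_j \<mapsto> a_(-j) reverses the crown order, so (a, b) \<mapsto> (flip b, flip a)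
  is an automorphism of G_n^k; it exchanges FCBP and LCBP and carries DLCF at i to DFCL at -i.
  This gives |DLCF| + |LCBP| = |S| + |FCBP|, and adding both identities proves the count.
*)

lemma cyc_dist_eq:
  assumes "i < N" "j < N"
  shows "cyc_dist N i j = (if i \<le> j then j - i else j + N - i)"
  using assms by (auto simp: cyc_dist_def mod_if not_le)

lemma cyc_dist_pred:
  assumes "x < N" "j < N" "x \<noteq> j"
  shows "cyc_dist N x ((j + N - 1) mod N) = cyc_dist N x j - 1"
  using assms by (auto simp: cyc_dist_eq mod_if)

lemma cyc_dist_self_pred:
  assumes "i < N"
  shows "cyc_dist N i ((i + N - 1) mod N) = N - 1"
  using assms by (auto simp: cyc_dist_eq mod_if)

lemma cyc_dist_neg:
  assumes "a < N" "b < N"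
  shows "cyc_dist N ((N - b) mod N) ((N - a) mod N) = cyc_dist N a b"
  using assms by (auto simp: cyc_dist_eq mod_if)

lemma neg_mod_Suc_mod:
  fixes i N :: nat
  assumes "i < N"
  shows "(N - (i + 1) mod N) mod N = ((N - i) mod N + N - 1) mod N"
proof (cases "i = 0")
  case True
  with assms show ?thesis by (cases "N = 1") auto
next
  case False
  with assms show ?thesis by (auto simp: mod_if)
qed

lemma neg_mod_eq_iff:
  fixes x y N :: nat
  assumes "x < N" "y < N"
  shows "(N - x) mod N = (N - y) mod N \<longleftrightarrow> x = y"
  using assms by (auto simp: mod_if split: if_splits)

lemma Inc_iff:
  "u \<in> Inc N k \<longleftrightarrow> (\<exists>a b. u = (A a, B b) \<and> a < N \<and> b < N \<and> cyc_dist N a b \<le> k)"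
  unfolding Inc_def incomp_def crown_ground_def by auto

lemma A_B_in_Inc_iff [simp]:
  "(A a, B b) \<in> Inc N k \<longleftrightarrow> a < N \<and> b < N \<and> cyc_dist N a b \<le> k"
  by (simp add: Inc_iff)

lemma Inc_subset_grid: "Inc N k \<subseteq> A ` {..<N} \<times> B ` {..<N}"
  by (auto simp: Inc_iff)

lemma finite_Inc: "finite (Inc N k)"
  by (rule finite_subset[OF Inc_subset_grid]) simp

lemma G_adj_sym: "G_adj N k u v \<longleftrightarrow> G_adj N k v u"
  unfolding G_adj_def by auto

lemma G_adj_A_B_iff:
  assumes "(A a, B b) \<in> Inc N k" "(A x, B y) \<in> Inc N k"
  shows "G_adj N k (A a, B b) (A x, B y) \<longleftrightarrow> k < cyc_dist N a y \<and> k < cyc_dist N x b"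
  using assms unfolding G_adj_def by auto

lemma not_G_adj_same_snd:
  assumes "u \<in> Inc N k" "snd u = snd v"
  shows "\<not> G_adj N k u v"
  using assms unfolding G_adj_def by (auto simp: Inc_iff)

lemma independent_Un:
  assumes "independent N k T" "independent N k U"
    and "\<And>u v. u \<in> T \<Longrightarrow> v \<in> U \<Longrightarrow> \<not> G_adj N k u v"
  shows "independent N k (T \<union> U)"
proof -
  have "\<not> G_adj N k u v" if "u \<in> T \<union> U" "v \<in> T \<union> U" for u v
    using that assms G_adj_sym[of N k u v] unfolding independent_def by blast
  then show ?thesis using assms unfolding independent_def by blast
qed

lemma is_cbp_iff:
  assumes "S \<subseteq> Inc N k"
  shows "is_cbp N k i S u v \<longleftrightarrow>
    (\<exists>b x. u = (A i, B b) \<and> v = (A x, B i) \<and> u \<in> S \<and> v \<in> S \<and> k < cyc_dist N x b)"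
proof
  assume cbp: "is_cbp N k i S u v"
  then have "u \<in> Inc N k" "v \<in> Inc N k" using assms unfolding is_cbp_def by auto
  with cbp show "\<exists>b x. u = (A i, B b) \<and> v = (A x, B i) \<and> u \<in> S \<and> v \<in> S \<and> k < cyc_dist N x b"
    unfolding is_cbp_def by (auto simp: Inc_iff)
next
  assume "\<exists>b x. u = (A i, B b) \<and> v = (A x, B i) \<and> u \<in> S \<and> v \<in> S \<and> k < cyc_dist N x b"
  then obtain b x where u: "u = (A i, B b)" "u \<in> S" and v: "v = (A x, B i)" "v \<in> S"
    and blocked: "k < cyc_dist N x b" by blast
  have "x < N" "b < N" using subsetD[OF assms u(2)] subsetD[OF assms v(2)] u v by auto
  with u v blocked show "is_cbp N k i S u v" unfolding is_cbp_def by auto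
qed

lemma LCBP_iff:
  assumes "S \<subseteq> Inc N k"
  shows "v \<in> LCBP N k i S \<longleftrightarrow>
    (\<exists>x b. v = (A x, B i) \<and> v \<in> S \<and> (A i, B b) \<in> S \<and> k < cyc_dist N x b)"
  using assms unfolding LCBP_def by (auto simp: is_cbp_iff)

lemma FCBP_iff:
  assumes "S \<subseteq> Inc N k"
  shows "u \<in> FCBP N k i S \<longleftrightarrow>
    (\<exists>b x. u = (A i, B b) \<and> u \<in> S \<and> (A x, B i) \<in> S \<and> k < cyc_dist N x b)"
  using assms unfolding FCBP_def by (auto simp: is_cbp_iff)

section \<open>Moving the last components of blocking pairs\<close>

lemma DFCL_eq:
  "DFCL N k i S = (S - FCBP N k i S) \<union> (\<lambda>v. (fst v, B ((i + N - 1) mod N))) ` LCBP N k i S"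
  unfolding DFCL_def by blast

lemma LCBP_shift_in_Inc:
  assumes "S \<subseteq> Inc N k" "i < N" "v \<in> LCBP N k i S"
  shows "(fst v, B ((i + N - 1) mod N)) \<in> Inc N k"
proof -
  obtain x b where v: "v = (A x, B i)" "v \<in> S" and u: "(A i, B b) \<in> S"
    and blocked: "k < cyc_dist N x b"
    using assms(3) LCBP_iff[OF assms(1)] by blast
  have "x \<noteq> i" using u blocked assms(1) by auto
  moreover have "x < N" "cyc_dist N x i \<le> k" using v assms(1) by auto
  ultimately show ?thesis using assms(2) cyc_dist_pred[of x N i] by (simp add: v)
qed

lemma LCBP_shift_not_adj:
  assumes S: "independent N k S" and i: "i < N"
    and u: "u \<in> S - FCBP N k i S" and v: "v \<in> LCBP N k i S"
  shows "\<not> G_adj N k u (fst v, B ((i + N - 1) mod N))"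
proof
  assume adj: "G_adj N k u (fst v, B ((i + N - 1) mod N))"
  have S_Inc: "S \<subseteq> Inc N k" using S by (simp add: independent_def)
  obtain a b where ab: "u = (A a, B b)" "a < N" "cyc_dist N a b \<le> k"
    using u S_Inc by (force simp: Inc_iff)
  obtain x where x: "v = (A x, B i)" "v \<in> S"
    using v LCBP_iff[OF S_Inc] by blast
  have blocked: "k < cyc_dist N x b" and far: "k < cyc_dist N a ((i + N - 1) mod N)"
    using adj LCBP_shift_in_Inc[OF S_Inc i v] u S_Inc by (auto simp: ab x G_adj_A_B_iff)
  have "\<not> G_adj N k u v" using S u x(2) by (auto simp: independent_def)
  moreover have "u \<in> Inc N k" "v \<in> Inc N k" using u x(2) S_Inc by auto
  ultimately have "cyc_dist N a i \<le> k" using blocked by (auto simp: ab x G_adj_A_B_iff)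
  have "a = i"
  proof (rule ccontr)
    assume "a \<noteq> i"
    with ab(2) i have "cyc_dist N a ((i + N - 1) mod N) = cyc_dist N a i - 1"
      by (rule cyc_dist_pred)
    with far \<open>cyc_dist N a i \<le> k\<close> show False by linarith
  qed
  then have "u \<in> FCBP N k i S" using u x blocked S_Inc by (auto simp: ab FCBP_iff)
  with u show False by blast
qed

lemma independent_DFCL:
  assumes S: "independent N k S" and i: "i < N"
  shows "independent N k (DFCL N k i S)"
  unfolding DFCL_eq
proof (rule independent_Un)
  have S_Inc: "S \<subseteq> Inc N k" using S by (simp add: independent_def)
  show "independent N k (S - FCBP N k i S)" using S by (auto simp: independent_def)
  show "independent N k ((\<lambda>v. (fst v, B ((i + N - 1) mod N))) ` LCBP N k i S)"
    using LCBP_shift_in_Inc[OF S_Inc i] not_G_adj_same_snd by (auto simp: independent_def)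
qed (use LCBP_shift_not_adj[OF S i] in blast)

lemma card_DFCL:
  assumes S: "independent N k S" and i: "i < N" and k: "k + 1 < N"
  shows "card (DFCL N k i S) + card (FCBP N k i S) = card S + card (LCBP N k i S)"
proof -
  define p where "p = (i + N - 1) mod N"
  have S_Inc: "S \<subseteq> Inc N k" using S by (simp add: independent_def)
  have fin: "finite S" using finite_Inc S_Inc by (rule finite_subset[rotated])
  have F: "FCBP N k i S \<subseteq> S" and L: "LCBP N k i S \<subseteq> S"
    unfolding FCBP_def LCBP_def by auto
  have inj: "inj_on (\<lambda>v. (fst v, B p)) (LCBP N k i S)"
    by (rule inj_onI) (auto simp: LCBP_iff[OF S_Inc])
  have disj: "(S - FCBP N k i S) \<inter> (\<lambda>v. (fst v, B p)) ` LCBP N k i S = {}"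
  proof -
    have "(fst v, B p) \<notin> S" if v: "v \<in> LCBP N k i S" for v
    proof
      assume shifted: "(fst v, B p) \<in> S"
      obtain x b where x: "v = (A x, B i)" and u: "(A i, B b) \<in> S"
        and blocked: "k < cyc_dist N x b"
        using v LCBP_iff[OF S_Inc] by blast
      have "k < cyc_dist N i p" using i k cyc_dist_self_pred[of i N] by (simp add: p_def)
      moreover have "(A i, B b) \<in> Inc N k" "(A x, B p) \<in> Inc N k"
        using u shifted S_Inc x by auto
      ultimately have "G_adj N k (A i, B b) (fst v, B p)"
        using blocked by (simp add: x G_adj_A_B_iff)
      with S u shifted show False by (auto simp: independent_def)
    qed
    then show ?thesis by blast
  qed
  have "card (DFCL N k i S) = card (S - FCBP N k i S) + card (LCBP N k i S)"
    unfolding DFCL_eq p_def[symmetric]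
    using card_Un_disjoint[OF _ _ disj] card_image[OF inj] fin F L
    by (simp add: finite_subset)
  moreover have "card (S - FCBP N k i S) + card (FCBP N k i S) = card S"
    using card_Diff_subset[OF finite_subset[OF F fin] F] card_mono[OF fin F] by simp
  ultimately show ?thesis by simp
qed

section \<open>Duality\<close>

fun crown_flip :: "nat \<Rightarrow> elem \<Rightarrow> elem" where
  "crown_flip N (A a) = B ((N - a) mod N)"
| "crown_flip N (B b) = A ((N - b) mod N)"

definition dual :: "nat \<Rightarrow> elem \<times> elem \<Rightarrow> elem \<times> elem" where
  "dual N u = (crown_flip N (snd u), crown_flip N (fst u))"

lemma dual_A_B [simp]: "dual N (A a, B b) = (A ((N - b) mod N), B ((N - a) mod N))"
  by (simp add: dual_def)

lemma neg_mod_neg_mod: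
  fixes x N :: nat
  assumes "x < N"
  shows "(N - (N - x) mod N) mod N = x"
  using assms by (auto simp: mod_if)

lemma dual_dual:
  assumes "u \<in> A ` {..<N} \<times> B ` {..<N}"
  shows "dual N (dual N u) = u"
  using assms by (auto simp: neg_mod_neg_mod)

lemma inj_on_dual: "inj_on (dual N) (A ` {..<N} \<times> B ` {..<N})"
  by (metis dual_dual inj_on_inverseI)

lemma dual_in_Inc:
  assumes "u \<in> Inc N k"
  shows "dual N u \<in> Inc N k"
  using assms by (auto simp: Inc_iff cyc_dist_neg)

lemma G_adj_dual:
  assumes "u \<in> Inc N k" "v \<in> Inc N k"
  shows "G_adj N k (dual N u) (dual N v) \<longleftrightarrow> G_adj N k u v"
  using assms dual_in_Inc[OF assms(1)] dual_in_Inc[OF assms(2)]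
  by (auto simp: Inc_iff G_adj_A_B_iff cyc_dist_neg)

lemma independent_dual_image:
  assumes "independent N k T"
  shows "independent N k (dual N ` T)"
  using assms dual_in_Inc G_adj_dual unfolding independent_def by blast

lemma card_dual_image:
  assumes "T \<subseteq> A ` {..<N} \<times> B ` {..<N}"
  shows "card (dual N ` T) = card T"
  using card_image[OF inj_on_subset[OF inj_on_dual assms]] .

lemma is_cbp_dual:
  assumes S: "S \<subseteq> Inc N k" and i: "i < N" and uv: "u \<in> S" "v \<in> S"
  shows "is_cbp N k ((N - i) mod N) (dual N ` S) (dual N v) (dual N u) \<longleftrightarrow> is_cbp N k i S u v"
proof -
  obtain a b where u: "u = (A a, B b)" "a < N" "b < N"
    using subsetD[OF S uv(1)] by (auto simp: Inc_iff)
  obtain x y where v: "v = (A x, B y)" "x < N" "y < N"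
    using subsetD[OF S uv(2)] by (auto simp: Inc_iff)
  have "dual N u \<in> dual N ` S" "dual N v \<in> dual N ` S" using uv by auto
  then show ?thesis
    using uv i u(2,3) v(2,3) unfolding is_cbp_def u(1) v(1)
    by (auto simp: neg_mod_eq_iff cyc_dist_neg)
qed

lemma FCBP_dual:
  assumes "S \<subseteq> Inc N k" "i < N"
  shows "FCBP N k ((N - i) mod N) (dual N ` S) = dual N ` LCBP N k i S"
proof -
  have "FCBP N k ((N - i) mod N) (dual N ` S)
      = dual N ` {v \<in> S. \<exists>u\<in>S. is_cbp N k ((N - i) mod N) (dual N ` S) (dual N v) (dual N u)}"
    unfolding FCBP_def by blast
  also have "\<dots> = dual N ` LCBP N k i S"
    using is_cbp_dual[OF assms] unfolding LCBP_def by blast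
  finally show ?thesis .
qed

lemma LCBP_dual:
  assumes "S \<subseteq> Inc N k" "i < N"
  shows "LCBP N k ((N - i) mod N) (dual N ` S) = dual N ` FCBP N k i S"
proof -
  have "LCBP N k ((N - i) mod N) (dual N ` S)
      = dual N ` {u \<in> S. \<exists>v\<in>S. is_cbp N k ((N - i) mod N) (dual N ` S) (dual N v) (dual N u)}"
    unfolding LCBP_def by blast
  also have "\<dots> = dual N ` FCBP N k i S"
    using is_cbp_dual[OF assms] unfolding FCBP_def by blast
  finally show ?thesis .
qed

lemma DLCF_eq:
  "DLCF N k i S = (S - LCBP N k i S) \<union> (\<lambda>u. (A ((i + 1) mod N), snd u)) ` FCBP N k i S"
  unfolding DLCF_def by blast

lemma DFCL_dual:
  assumes S: "S \<subseteq> Inc N k" and i: "i < N"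
  shows "DFCL N k ((N - i) mod N) (dual N ` S) = dual N ` DLCF N k i S"
proof -
  have L: "LCBP N k i S \<subseteq> S" unfolding LCBP_def by auto
  have inj: "inj_on (dual N) S"
    using inj_on_subset[OF inj_on_dual subset_trans[OF S Inc_subset_grid]] .
  have shift: "(fst (dual N u), B (((N - i) mod N + N - 1) mod N))
      = dual N (A ((i + 1) mod N), snd u)"
    if "u \<in> FCBP N k i S" for u
  proof -
    from that[unfolded FCBP_iff[OF S]] obtain b where "u = (A i, B b)" by blast
    then show ?thesis using neg_mod_Suc_mod[OF i] by simp
  qed
  have diff_eq: "dual N ` (S - LCBP N k i S) = dual N ` S - dual N ` LCBP N k i S"
    using inj_on_image_set_diff[OF inj Diff_subset L] .
  have shift_eq: "(\<lambda>w. (fst w, B (((N - i) mod N + N - 1) mod N))) ` dual N ` FCBP N k i S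
      = dual N ` (\<lambda>u. (A ((i + 1) mod N), snd u)) ` FCBP N k i S"
    unfolding image_image using shift by (rule image_cong[OF refl])
  show ?thesis
    unfolding DFCL_eq DLCF_eq FCBP_dual[OF S i] LCBP_dual[OF S i] image_Un diff_eq shift_eq ..
qed

lemma DLCF_subset_grid:
  assumes "S \<subseteq> Inc N k" "i < N"
  shows "DLCF N k i S \<subseteq> A ` {..<N} \<times> B ` {..<N}"
proof -
  have grid: "S \<subseteq> A ` {..<N} \<times> B ` {..<N}" using subset_trans[OF assms(1) Inc_subset_grid] .
  then have "(A ((i + 1) mod N), snd u) \<in> A ` {..<N} \<times> B ` {..<N}" if "u \<in> S" for u
    using that assms(2) by auto
  moreover have "FCBP N k i S \<subseteq> S" unfolding FCBP_def by auto
  ultimately show ?thesis using grid unfolding DLCF_eq by blast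
qed

lemma dual_image_dual_image:
  assumes "T \<subseteq> A ` {..<N} \<times> B ` {..<N}"
  shows "dual N ` dual N ` T = T"
proof -
  have "dual N ` dual N ` T = (\<lambda>u. u) ` T"
    unfolding image_image using assms by (intro image_cong) (auto intro: dual_dual)
  then show ?thesis by simp
qed

lemma DLCF_eq_dual_DFCL:
  assumes "S \<subseteq> Inc N k" "i < N"
  shows "DLCF N k i S = dual N ` DFCL N k ((N - i) mod N) (dual N ` S)"
  unfolding DFCL_dual[OF assms] dual_image_dual_image[OF DLCF_subset_grid[OF assms]] ..

lemma independent_DLCF:
  assumes S: "independent N k S" and i: "i < N"
  shows "independent N k (DLCF N k i S)"
proof -
  have S_Inc: "S \<subseteq> Inc N k" using S by (simp add: independent_def)
  have "independent N k (DFCL N k ((N - i) mod N) (dual N ` S))"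
    using independent_dual_image[OF S] by (rule independent_DFCL) (use i in simp)
  then show ?thesis
    unfolding DLCF_eq_dual_DFCL[OF S_Inc i] by (rule independent_dual_image)
qed

lemma card_DLCF:
  assumes S: "independent N k S" and i: "i < N" and k: "k + 1 < N"
  shows "card (DLCF N k i S) + card (LCBP N k i S) = card S + card (FCBP N k i S)"
proof -
  define i' where "i' = (N - i) mod N"
  have S_Inc: "S \<subseteq> Inc N k" using S by (simp add: independent_def)
  then have grid: "T \<subseteq> A ` {..<N} \<times> B ` {..<N}" if "T \<subseteq> S" for T
    using that Inc_subset_grid by blast
  have "independent N k (DFCL N k i' (dual N ` S))"
    using independent_dual_image[OF S] i by (simp add: i'_def independent_DFCL)
  then have "card (DLCF N k i S) = card (DFCL N k i' (dual N ` S))"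
    unfolding DLCF_eq_dual_DFCL[OF S_Inc i] i'_def[symmetric]
    by (intro card_dual_image subset_trans[OF _ Inc_subset_grid[of N k]]) (simp add: independent_def)
  also have "\<dots> + card (FCBP N k i' (dual N ` S))
      = card (dual N ` S) + card (LCBP N k i' (dual N ` S))"
    using independent_dual_image[OF S] i k by (simp add: i'_def card_DFCL)
  finally show ?thesis
    unfolding i'_def FCBP_dual[OF S_Inc i] LCBP_dual[OF S_Inc i]
    using card_dual_image[OF grid] unfolding FCBP_def LCBP_def by simp
qed

theorem lemma4p7:
  fixes n k i :: nat and S :: "(elem \<times> elem) set"
  assumes "n \<ge> 3"
    and "S \<subseteq> Inc (n + k) k"
    and "independent (n + k) k S"
    and "i < n + k"
  shows "(DFCL (n + k) k i S \<subseteq> Inc (n + k) k \<and> independent (n + k) k (DFCL (n + k) k i S))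
     \<and> (DLCF (n + k) k i S \<subseteq> Inc (n + k) k \<and> independent (n + k) k (DLCF (n + k) k i S))
     \<and> card (DFCL (n + k) k i S) + card (DLCF (n + k) k i S) = 2 * card S"
proof -
  have k: "k + 1 < n + k" using assms(1) by simp
  have DFCL_indep: "independent (n + k) k (DFCL (n + k) k i S)"
    using assms(3,4) by (rule independent_DFCL)
  have DLCF_indep: "independent (n + k) k (DLCF (n + k) k i S)"
    using assms(3,4) by (rule independent_DLCF)
  have "card (DFCL (n + k) k i S) + card (DLCF (n + k) k i S) = 2 * card S"
    using card_DFCL[OF assms(3,4) k] card_DLCF[OF assms(3,4) k] by simp
  with DFCL_indep DLCF_indep show ?thesis unfolding independent_def by blast
qed

end
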